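(* Let $\lambda,R_c,H,\alpha_L,\alpha_N,B,C>0$. For $0<\delta<1$ define, with $P_L(r_0)=\frac{1}{1+C\exp(-B(\arctan(H/r_0)-C))}$, $P_N=1-P_L$, $A_s(r_0)=(\delta(H^2+r_0^2)^{\alpha_s/2})^{1/\alpha_N}$, $B_s(r_0)=(\frac1\delta(H^2+r_0^2)^{\alpha_s/2})^{1/\alpha_N}$ ($s\in\{L,N\}$), the area fractions $\bar{C}_{\mathcal{A}_i}=C_{\mathcal{A}_i}/(\pi R_c^2)$, where $C_{\mathcal{A}_1}=2\pi\sum_{s}\int_0^{R_c}P_s(r_0)F_{r_1|r_0}(A_s(r_0))r_0\,dr_0$, $C_{\mathcal{A}_2}=2\pi\sum_{s}\int_0^{R_c}P_s(r_0)(F_{r_1|r_0}(B_s(r_0))-F_{r_1|r_0}(A_s(r_0)))r_0\,dr_0$, $C_{\mathcal{A}_3}=2\pi\sum_{s}\int_0^{R_c}P_s(r_0)(1-F_{r_1|r_0}(B_s(r_0)))r_0\,dr_0$. Then, on $0<\delta<1$, $\bar{C}_{\mathcal{A}_1}$ and $\bar{C}_{\mathcal{A}_3}$ increase with $\delta$, while $\bar{C}_{\mathcal{A}_2}$ decreases with $\delta$.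
   Context: $F_{r_1|r_0}$ is the CDF of the distance $r_1$ from a point $x_0=(r_0,0)$, $0\le r_0\le R_c$, to the nearest point of $\Phi\setminus\{y:\|y\|\le R_c\}$, where $\Phi$ is a homogeneous Poisson point process of intensity $\lambda$ on $\mathbb{R}^2$: $F_{r_1|r_0}(r)=0$ for $r\le R_c-r_0$, $=1-e^{-\lambda\zeta_2(r)}$ for $R_c-r_0<r<R_c+r_0$ where $\zeta_2(r)=\pi r^2-\theta_1R_c^2+R_c^2\sin\theta_1\cos\theta_1-\theta_2r^2+r^2\sin\theta_2\cos\theta_2$, $\theta_1=\arccos\frac{R_c^2+r_0^2-r^2}{2R_cr_0}$, $\theta_2=\arccos\frac{r_0^2+r^2-R_c^2}{2r_0r}$, and $=1-e^{-\lambda(\pi r^2-\pi R_c^2)}$ otherwise. $C_{\mathcal{A}_i}$ is the expected area of the set of users in the malfunction disc served by the nearest ground station only ($i=1$), cooperatively by the UAV and the nearest ground station ($i=2$), or by the UAV only ($i=3$), and $\delta$ is the cooperation parameter. *)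

theory Defs
  imports "HOL-Analysis.Analysis"
begin

(* CDF F_{r1|r0}(r) of the distance from x0=(r0,0) to the nearest PPP point outside the disc of radius Rc *)
definition zeta2 :: "real \<Rightarrow> real \<Rightarrow> real \<Rightarrow> real" where
  "zeta2 Rc r0 r =
     (let th1 = arccos ((Rc^2 + r0^2 - r^2) / (2 * Rc * r0));
          th2 = arccos ((r0^2 + r^2 - Rc^2) / (2 * r0 * r))
      in pi * r^2 - th1 * Rc^2 + Rc^2 * sin th1 * cos th1 - th2 * r^2 + r^2 * sin th2 * cos th2)"

definition Fcdf :: "real \<Rightarrow> real \<Rightarrow> real \<Rightarrow> real \<Rightarrow> real" where
  "Fcdf lam Rc r0 r =
     (if r \<le> Rc - r0 then 0
      else if r < Rc + r0 then 1 - exp (- lam * zeta2 Rc r0 r)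
      else 1 - exp (- lam * (pi * r^2 - pi * Rc^2)))"

definition PL :: "real \<Rightarrow> real \<Rightarrow> real \<Rightarrow> real \<Rightarrow> real" where
  "PL H B C r0 = 1 / (1 + C * exp (- B * (arctan (H / r0) - C)))"

definition PN :: "real \<Rightarrow> real \<Rightarrow> real \<Rightarrow> real \<Rightarrow> real" where
  "PN H B C r0 = 1 - PL H B C r0"

definition Asf :: "real \<Rightarrow> real \<Rightarrow> real \<Rightarrow> real \<Rightarrow> real \<Rightarrow> real" where
  "Asf \<delta> H als alN r0 = (\<delta> * (H^2 + r0^2) powr (als / 2)) powr (1 / alN)"

definition Bsf :: "real \<Rightarrow> real \<Rightarrow> real \<Rightarrow> real \<Rightarrow> real \<Rightarrow> real" where
  "Bsf \<delta> H als alN r0 = ((1 / \<delta>) * (H^2 + r0^2) powr (als / 2)) powr (1 / alN)"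

definition CA1 :: "real \<Rightarrow> real \<Rightarrow> real \<Rightarrow> real \<Rightarrow> real \<Rightarrow> real \<Rightarrow> real \<Rightarrow> real \<Rightarrow> real" where
  "CA1 lam Rc H alL alN B C \<delta> = 2 * pi *
     (integral {0..Rc} (\<lambda>r0. PL H B C r0 * Fcdf lam Rc r0 (Asf \<delta> H alL alN r0) * r0) +
      integral {0..Rc} (\<lambda>r0. PN H B C r0 * Fcdf lam Rc r0 (Asf \<delta> H alN alN r0) * r0))"

definition CA2 :: "real \<Rightarrow> real \<Rightarrow> real \<Rightarrow> real \<Rightarrow> real \<Rightarrow> real \<Rightarrow> real \<Rightarrow> real \<Rightarrow> real" where
  "CA2 lam Rc H alL alN B C \<delta> = 2 * pi *
     (integral {0..Rc} (\<lambda>r0. PL H B C r0 *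
         (Fcdf lam Rc r0 (Bsf \<delta> H alL alN r0) - Fcdf lam Rc r0 (Asf \<delta> H alL alN r0)) * r0) +
      integral {0..Rc} (\<lambda>r0. PN H B C r0 *
         (Fcdf lam Rc r0 (Bsf \<delta> H alN alN r0) - Fcdf lam Rc r0 (Asf \<delta> H alN alN r0)) * r0))"

definition CA3 :: "real \<Rightarrow> real \<Rightarrow> real \<Rightarrow> real \<Rightarrow> real \<Rightarrow> real \<Rightarrow> real \<Rightarrow> real \<Rightarrow> real" where
  "CA3 lam Rc H alL alN B C \<delta> = 2 * pi *
     (integral {0..Rc} (\<lambda>r0. PL H B C r0 * (1 - Fcdf lam Rc r0 (Bsf \<delta> H alL alN r0)) * r0) +
      integral {0..Rc} (\<lambda>r0. PN H B C r0 * (1 - Fcdf lam Rc r0 (Bsf \<delta> H alN alN r0)) * r0))"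

definition CbarA1 where "CbarA1 lam Rc H alL alN B C \<delta> = CA1 lam Rc H alL alN B C \<delta> / (pi * Rc^2)"
definition CbarA2 where "CbarA2 lam Rc H alL alN B C \<delta> = CA2 lam Rc H alL alN B C \<delta> / (pi * Rc^2)"
definition CbarA3 where "CbarA3 lam Rc H alL alN B C \<delta> = CA3 lam Rc H alL alN B C \<delta> / (pi * Rc^2)"

end

theory Submission
  imports Defs
begin

(* Since A_s grows and B_s
   shrinks with delta, it suffices that F_{r1|r0} is a nondecreasing function of r with values in
   [0,1]. Its exponent is the area of the part of the disc of radius r around x0 outside the disc
   of radius Rc: this is 0 at r = Rc - r0, on the lens range (Rc - r0, Rc + r0) it has derivative
   2 r (pi - theta2) >= 0, and at r = Rc + r0 it meets the annulus area pi r^2 - pi Rc^2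
   continuously. The integrands are bounded and Borel measurable, hence integrable. *)

\<comment> \<open>\<open>\<theta> - sin \<theta> cos \<theta>\<close> for \<open>\<theta> = arccos c\<close>: the area of the unit-disc segment cut off by a chord
   at distance \<open>c\<close> from the centre\<close>
definition circular_segment :: "real \<Rightarrow> real" where
  "circular_segment c = arccos c - c * sqrt (1 - c^2)"

lemma circular_segment_deriv:
  assumes "-1 < c" "c < 1"
  shows "(circular_segment has_real_derivative - 2 * sqrt (1 - c^2)) (at c)"
proof -
  have pos: "0 < 1 - c^2"
    using assms by (simp add: abs_square_less_1)
  have D: "(circular_segment has_real_derivative
      - inverse (sqrt (1 - c^2)) - (sqrt (1 - c^2) + c * (inverse (sqrt (1 - c^2)) / 2 * - (2 * c)))) (at c)"
    unfolding circular_segment_def[abs_def]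
    by (rule derivative_eq_intros DERIV_arccos DERIV_real_sqrt[THEN DERIV_chain2] refl
        | use assms pos in force)+
  have "- inverse (sqrt (1 - c^2)) - (sqrt (1 - c^2) + c * (inverse (sqrt (1 - c^2)) / 2 * - (2 * c)))
      = - 2 * sqrt (1 - c^2)"
    using pos by (simp add: field_simps power2_eq_square)
  with D show ?thesis by metis
qed

lemma continuous_on_circular_segment: "continuous_on {-1..1} circular_segment"
  unfolding circular_segment_def[abs_def]
  by (intro continuous_intros continuous_on_arccos) auto

lemma circular_segment_minus_one [simp]: "circular_segment (-1) = pi"
  and circular_segment_one [simp]: "circular_segment 1 = 0"
  by (simp_all add: circular_segment_def)

definition cos_theta1 :: "real \<Rightarrow> real \<Rightarrow> real \<Rightarrow> real" where
  "cos_theta1 Rc r0 r = (Rc^2 + r0^2 - r^2) / (2 * Rc * r0)"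

definition cos_theta2 :: "real \<Rightarrow> real \<Rightarrow> real \<Rightarrow> real" where
  "cos_theta2 Rc r0 r = (r0^2 + r^2 - Rc^2) / (2 * r0 * r)"

lemma cos_theta_bounds:
  assumes "0 < r0" "r0 \<le> Rc" "Rc - r0 \<le> r" "r \<le> Rc + r0"
  shows "\<bar>cos_theta1 Rc r0 r\<bar> \<le> 1" "\<bar>cos_theta2 Rc r0 r\<bar> \<le> 1"
proof -
  have "(Rc - r0)^2 \<le> r^2" "r^2 \<le> (Rc + r0)^2"
    using assms by (intro power_mono; simp)+
  then show "\<bar>cos_theta1 Rc r0 r\<bar> \<le> 1"
    using assms unfolding cos_theta1_def
    by (simp add: abs_le_iff divide_le_eq le_divide_eq power2_eq_square algebra_simps)
  show "\<bar>cos_theta2 Rc r0 r\<bar> \<le> 1"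
  proof (cases "r = 0")
    case False
    have "(r - r0)^2 \<le> Rc^2" "Rc^2 \<le> (r + r0)^2"
      using assms abs_le_square_iff[of "r - r0" Rc] by (auto intro: power_mono)
    then show ?thesis
      using assms False unfolding cos_theta2_def
      by (simp add: abs_le_iff divide_le_eq le_divide_eq power2_eq_square algebra_simps)
  qed (simp add: cos_theta2_def)
qed

lemma cos_theta_bounds_strict:
  assumes "0 < r0" "r0 \<le> Rc" "Rc - r0 < r" "r < Rc + r0"
  shows "\<bar>cos_theta1 Rc r0 r\<bar> < 1" "\<bar>cos_theta2 Rc r0 r\<bar> < 1"
proof -
  have "(Rc - r0)^2 < r^2" "r^2 < (Rc + r0)^2"
    using assms by (intro power_strict_mono; simp)+
  then show "\<bar>cos_theta1 Rc r0 r\<bar> < 1"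
    using assms unfolding cos_theta1_def
    by (simp add: abs_less_iff divide_less_eq less_divide_eq power2_eq_square algebra_simps)
  have "\<bar>r - r0\<bar> < Rc"
    using assms by auto
  then have "(r - r0)^2 < Rc^2" "Rc^2 < (r + r0)^2"
    using assms power_strict_mono[of "\<bar>r - r0\<bar>" Rc 2] by (auto intro: power_strict_mono)
  then show "\<bar>cos_theta2 Rc r0 r\<bar> < 1"
    using assms unfolding cos_theta2_def
    by (simp add: abs_less_iff divide_less_eq less_divide_eq power2_eq_square algebra_simps)
qed

lemma cos_theta1_deriv:
  assumes "0 < r0" "0 < Rc"
  shows "(cos_theta1 Rc r0 has_real_derivative - r / (Rc * r0)) (at r)"
  unfolding cos_theta1_def[abs_def] using assms
  by (auto intro!: derivative_eq_intros simp: field_simps)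

lemma cos_theta2_deriv:
  assumes "0 < r0" "0 < r"
  shows "(cos_theta2 Rc r0 has_real_derivative (r^2 - r0^2 + Rc^2) / (2 * r0 * r^2)) (at r)"
  unfolding cos_theta2_def[abs_def] using assms
  by (auto intro!: derivative_eq_intros simp: field_simps power2_eq_square)

lemma cos_theta_law_of_sines:
  assumes "0 < r0" "0 < Rc" "0 < r"
  shows "Rc * sqrt (1 - (cos_theta1 Rc r0 r)^2) = r * sqrt (1 - (cos_theta2 Rc r0 r)^2)"
proof -
  have "Rc^2 * (1 - (cos_theta1 Rc r0 r)^2) = r^2 * (1 - (cos_theta2 Rc r0 r)^2)"
    unfolding cos_theta1_def cos_theta2_def using assms by (simp add: field_simps power2_eq_square)
  then have "sqrt (Rc^2 * (1 - (cos_theta1 Rc r0 r)^2)) = sqrt (r^2 * (1 - (cos_theta2 Rc r0 r)^2))"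
    by simp
  then show ?thesis
    using assms by (simp add: real_sqrt_mult)
qed

definition lens_area :: "real \<Rightarrow> real \<Rightarrow> real \<Rightarrow> real" where
  "lens_area Rc r0 r = pi * r^2 - Rc^2 * circular_segment (cos_theta1 Rc r0 r)
     - r^2 * circular_segment (cos_theta2 Rc r0 r)"

lemma zeta2_eq_lens_area:
  assumes "0 < r0" "r0 \<le> Rc" "Rc - r0 \<le> r" "r \<le> Rc + r0"
  shows "zeta2 Rc r0 r = lens_area Rc r0 r"
proof -
  have "(Rc^2 + r0^2 - r^2) / (2 * Rc * r0) = cos_theta1 Rc r0 r"
    and "(r0^2 + r^2 - Rc^2) / (2 * r0 * r) = cos_theta2 Rc r0 r"
    by (simp_all add: cos_theta1_def cos_theta2_def)
  then show ?thesis
    using cos_theta_bounds[OF assms]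
    unfolding zeta2_def lens_area_def circular_segment_def Let_def
    by (simp add: sin_arccos_abs cos_arccos_abs abs_le_iff algebra_simps)
qed

lemma lens_area_deriv:
  assumes "0 < r0" "r0 \<le> Rc" "Rc - r0 < r" "r < Rc + r0"
  shows "(lens_area Rc r0 has_real_derivative 2 * r * (pi - arccos (cos_theta2 Rc r0 r))) (at r)"
proof -
  have r_pos: "0 < r"
    using assms by simp
  define c1 c2 where "c1 = cos_theta1 Rc r0 r" and "c2 = cos_theta2 Rc r0 r"
  define s1 s2 where "s1 = sqrt (1 - c1^2)" and "s2 = sqrt (1 - c2^2)"
  have c_bounds: "-1 < c1" "c1 < 1" "-1 < c2" "c2 < 1"
    using cos_theta_bounds_strict[OF assms] unfolding c1_def c2_def by auto
  have D1: "(cos_theta1 Rc r0 has_real_derivative - r / (Rc * r0)) (at r)"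
    using assms by (intro cos_theta1_deriv) auto
  have D2: "(cos_theta2 Rc r0 has_real_derivative (r^2 - r0^2 + Rc^2) / (2 * r0 * r^2)) (at r)"
    using assms r_pos by (intro cos_theta2_deriv) auto
  have S1: "((\<lambda>x. circular_segment (cos_theta1 Rc r0 x)) has_real_derivative
      - 2 * s1 * (- r / (Rc * r0))) (at r)"
    using DERIV_chain2[OF circular_segment_deriv D1] c_bounds unfolding c1_def s1_def by simp
  have S2: "((\<lambda>x. circular_segment (cos_theta2 Rc r0 x)) has_real_derivative
      - 2 * s2 * ((r^2 - r0^2 + Rc^2) / (2 * r0 * r^2))) (at r)"
    using DERIV_chain2[OF circular_segment_deriv D2] c_bounds unfolding c2_def s2_def by simp
  have sq: "((\<lambda>x. x^2) has_real_derivative 2 * r) (at r)"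
    by (auto intro!: derivative_eq_intros)
  have D: "(lens_area Rc r0 has_real_derivative
      pi * (2 * r) - Rc^2 * (- 2 * s1 * (- r / (Rc * r0)))
      - (2 * r * circular_segment c2 + - 2 * s2 * ((r^2 - r0^2 + Rc^2) / (2 * r0 * r^2)) * r^2)) (at r)"
    (is "(_ has_real_derivative ?D) _")
    unfolding lens_area_def[abs_def] c2_def by (intro DERIV_diff DERIV_cmult DERIV_mult sq S1 S2)
  have "Rc * s1 = r * s2"
    unfolding s1_def s2_def c1_def c2_def using assms r_pos by (intro cos_theta_law_of_sines) auto
  \<comment> \<open>by the law of sines all square-root terms become multiples of \<open>s2\<close>, and these cancel\<close>
  then have "Rc^2 * (- 2 * s1 * (- r / (Rc * r0))) = 2 * r * s2 * (r / r0)"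
    using assms by (simp add: field_simps power2_eq_square)
  then have "?D = 2 * r * (pi - arccos c2) + s2 * (2 * r * c2 - 2 * r * (r / r0) + (r^2 - r0^2 + Rc^2) / r0)"
    using assms r_pos unfolding circular_segment_def s2_def[symmetric] by (simp add: field_simps power2_eq_square)
  moreover have "2 * r * c2 - 2 * r * (r / r0) + (r^2 - r0^2 + Rc^2) / r0 = 0"
    unfolding c2_def cos_theta2_def using assms r_pos by (simp add: field_simps power2_eq_square)
  ultimately have "?D = 2 * r * (pi - arccos c2)"
    by simp
  with D show ?thesis
    unfolding c2_def by simp
qed

lemma continuous_on_lens_area:
  assumes "0 < r0" "r0 \<le> Rc"
  shows "continuous_on {Rc - r0..Rc + r0} (lens_area Rc r0)"
proof -
  have c1: "continuous_on {Rc - r0..Rc + r0} (cos_theta1 Rc r0)"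
    unfolding cos_theta1_def[abs_def] using assms by (intro continuous_intros) auto
  have c2: "continuous_on {Rc - r0..Rc + r0} (cos_theta2 Rc r0)"
  proof (cases "r0 = Rc")
    case True
    \<comment> \<open>then \<open>r = 0\<close> lies in the interval, and \<open>cos_theta2\<close> is \<open>r / (2 Rc)\<close> there thanks to \<open>0 / 0 = 0\<close>\<close>
    then have "cos_theta2 Rc r0 = (\<lambda>r. r / (2 * Rc))"
      unfolding cos_theta2_def by (auto simp: fun_eq_iff field_simps power2_eq_square)
    then show ?thesis
      using assms by (auto intro!: continuous_intros)
  next
    case False
    then show ?thesis
      unfolding cos_theta2_def[abs_def] using assms by (intro continuous_intros) auto
  qed
  have "cos_theta1 Rc r0 ` {Rc - r0..Rc + r0} \<subseteq> {-1..1}"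
    and "cos_theta2 Rc r0 ` {Rc - r0..Rc + r0} \<subseteq> {-1..1}"
    using cos_theta_bounds[OF assms] by (auto simp: abs_le_iff)
  then show ?thesis
    unfolding lens_area_def[abs_def]
    by (intro continuous_intros continuous_on_compose2[OF continuous_on_circular_segment] c1 c2)
qed

lemma lens_area_left_endpoint:
  assumes "0 < r0" "r0 \<le> Rc"
  shows "lens_area Rc r0 (Rc - r0) = 0"
proof -
  have "cos_theta1 Rc r0 (Rc - r0) = 1"
    unfolding cos_theta1_def using assms by (simp add: field_simps power2_eq_square)
  moreover have "cos_theta2 Rc r0 (Rc - r0) = -1" if "Rc - r0 \<noteq> 0"
    unfolding cos_theta2_def using assms that by (simp add: field_simps power2_eq_square)
  ultimately show ?thesis
    unfolding lens_area_def by (cases "Rc - r0 = 0") auto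
qed

lemma lens_area_right_endpoint:
  assumes "0 < r0" "r0 \<le> Rc"
  shows "lens_area Rc r0 (Rc + r0) = pi * (Rc + r0)^2 - pi * Rc^2"
proof -
  have "cos_theta1 Rc r0 (Rc + r0) = -1"
    unfolding cos_theta1_def using assms by (simp add: field_simps power2_eq_square)
  moreover have "cos_theta2 Rc r0 (Rc + r0) = 1"
  proof -
    have "0 < 2 * r0 * (Rc + r0)"
      using assms by simp
    then show ?thesis
      unfolding cos_theta2_def by (simp add: field_simps power2_eq_square)
  qed
  ultimately show ?thesis
    unfolding lens_area_def by simp
qed

lemma lens_area_mono:
  assumes "0 < r0" "r0 \<le> Rc" "Rc - r0 \<le> r" "r \<le> r'" "r' \<le> Rc + r0"
  shows "lens_area Rc r0 r \<le> lens_area Rc r0 r'"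
proof (rule DERIV_nonneg_imp_increasing_open[OF \<open>r \<le> r'\<close>])
  fix t
  assume "r < t" "t < r'"
  then have t: "Rc - r0 < t" "t < Rc + r0"
    using assms by auto
  have "0 \<le> 2 * t * (pi - arccos (cos_theta2 Rc r0 t))"
    using arccos_ubound[of "cos_theta2 Rc r0 t"] cos_theta_bounds_strict(2)[OF assms(1,2) t] t assms
    by (simp add: abs_less_iff)
  then show "\<exists>D. (lens_area Rc r0 has_real_derivative D) (at t) \<and> 0 \<le> D"
    using lens_area_deriv[OF assms(1,2) t] by blast
next
  show "continuous_on {r..r'} (lens_area Rc r0)"
    using continuous_on_subset[OF continuous_on_lens_area[OF assms(1,2)]] assms by auto
qed

definition outer_area :: "real \<Rightarrow> real \<Rightarrow> real \<Rightarrow> real" where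
  "outer_area Rc r0 r = (if r < Rc + r0 then zeta2 Rc r0 r else pi * r^2 - pi * Rc^2)"

lemma Fcdf_eq_outer_area:
  "Fcdf lam Rc r0 r = (if r \<le> Rc - r0 then 0 else 1 - exp (- lam * outer_area Rc r0 r))"
  unfolding Fcdf_def outer_area_def by auto

lemma outer_area_left_endpoint:
  assumes "0 \<le> r0" "r0 \<le> Rc"
  shows "outer_area Rc r0 (Rc - r0) = 0"
proof (cases "r0 = 0")
  case False
  then show ?thesis
    using assms zeta2_eq_lens_area[of r0 Rc "Rc - r0"] lens_area_left_endpoint[of r0 Rc]
    unfolding outer_area_def by simp
qed (simp add: outer_area_def)

lemma outer_area_mono:
  assumes "0 \<le> r0" "r0 \<le> Rc" "Rc - r0 \<le> r" "r \<le> r'"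
  shows "outer_area Rc r0 r \<le> outer_area Rc r0 r'"
proof -
  have annulus_mono: "pi * x^2 - pi * Rc^2 \<le> pi * y^2 - pi * Rc^2" if "0 \<le> x" "x \<le> y" for x y
    using power_mono[OF that(2,1), of 2] by simp
  consider "r' < Rc + r0" | "r < Rc + r0" "Rc + r0 \<le> r'" | "Rc + r0 \<le> r"
    by linarith
  then show ?thesis
  proof cases
    case 1
    then have "0 < r0"
      using assms by simp
    with 1 assms show ?thesis
      using lens_area_mono[of r0 Rc r r'] zeta2_eq_lens_area[of r0 Rc]
      unfolding outer_area_def by auto
  next
    case 2
    then have r0: "0 < r0"
      using assms by simp
    have "zeta2 Rc r0 r = lens_area Rc r0 r"
      using 2 assms r0 by (intro zeta2_eq_lens_area) auto
    also have "\<dots> \<le> lens_area Rc r0 (Rc + r0)"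
      using 2 assms r0 by (intro lens_area_mono) auto
    also have "\<dots> \<le> pi * r'^2 - pi * Rc^2"
      unfolding lens_area_right_endpoint[OF r0 assms(2)] using 2 assms by (intro annulus_mono) auto
    finally show ?thesis
      using 2 unfolding outer_area_def by simp
  next
    case 3
    then show ?thesis
      using assms annulus_mono[of r r'] unfolding outer_area_def by auto
  qed
qed

lemma Fcdf_nonneg:
  assumes "0 \<le> lam" "0 \<le> r0" "r0 \<le> Rc"
  shows "0 \<le> Fcdf lam Rc r0 r"
proof (cases "r \<le> Rc - r0")
  case False
  then have "0 \<le> outer_area Rc r0 r"
    using assms outer_area_mono[of r0 Rc "Rc - r0" r] outer_area_left_endpoint[of r0 Rc] by simp
  then show ?thesis
    using False assms unfolding Fcdf_eq_outer_area by simp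
qed (simp add: Fcdf_eq_outer_area)

lemma Fcdf_le_one: "Fcdf lam Rc r0 r \<le> 1"
  unfolding Fcdf_eq_outer_area by simp

lemma Fcdf_mono:
  assumes "0 \<le> lam" "0 \<le> r0" "r0 \<le> Rc" "r \<le> r'"
  shows "Fcdf lam Rc r0 r \<le> Fcdf lam Rc r0 r'"
proof (cases "r \<le> Rc - r0")
  case True
  then show ?thesis
    using Fcdf_nonneg[OF assms(1-3), of r'] by (simp add: Fcdf_eq_outer_area)
next
  case False
  then have "lam * outer_area Rc r0 r \<le> lam * outer_area Rc r0 r'"
    using assms outer_area_mono[of r0 Rc r r'] by (intro mult_left_mono) auto
  then show ?thesis
    using False assms unfolding Fcdf_eq_outer_area by auto
qed

\<comment> \<open>\<open>arccos\<close> is a definite description, so off \<open>[-1,1]\<close> it is one fixed junk value\<close>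
lemma arccos_outside_unit_interval:
  assumes "1 < \<bar>y\<bar>"
  shows "arccos y = arccos 2"
proof -
  have "cos x \<noteq> y" "cos x \<noteq> 2" for x
    using assms abs_cos_le_one[of x] by (auto simp del: abs_cos_le_one)
  then show ?thesis
    unfolding arccos_def by simp
qed

lemma borel_measurable_arccos [measurable]: "arccos \<in> borel_measurable borel"
proof -
  have clip: "arccos y = (if \<bar>y\<bar> \<le> 1 then arccos (max (-1) (min 1 y)) else arccos 2)" for y
  proof (cases "\<bar>y\<bar> \<le> 1")
    case True
    then have "max (-1) (min 1 y) = y"
      by (auto simp: abs_le_iff)
    with True show ?thesis
      by simp
  next
    case False
    then show ?thesis
      using arccos_outside_unit_interval[of y] by simp
  qed
  have "continuous_on UNIV (\<lambda>y::real. arccos (max (-1) (min 1 y)))"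
    by (intro continuous_intros) auto
  then have [measurable]: "(\<lambda>y::real. arccos (max (-1) (min 1 y))) \<in> borel_measurable borel"
    by (rule borel_measurable_continuous_onI)
  show ?thesis
    by (subst clip[abs_def]) measurable
qed

lemma borel_measurable_Fcdf [measurable]:
  assumes [measurable]: "f \<in> borel_measurable M" "g \<in> borel_measurable M"
  shows "(\<lambda>x. Fcdf lam Rc (f x) (g x)) \<in> borel_measurable M"
  unfolding Fcdf_def zeta2_def Let_def by measurable

lemma borel_measurable_PL [measurable]: "PL H B C \<in> borel_measurable borel"
  unfolding PL_def by measurable

lemma borel_measurable_PN [measurable]: "PN H B C \<in> borel_measurable borel"
  unfolding PN_def by measurable

lemma borel_measurable_Asf [measurable]: "Asf \<delta> H als alN \<in> borel_measurable borel"
  unfolding Asf_def by measurable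

lemma borel_measurable_Bsf [measurable]: "Bsf \<delta> H als alN \<in> borel_measurable borel"
  unfolding Bsf_def by measurable

lemma integrable_on_bounded_borel:
  fixes f :: "real \<Rightarrow> real"
  assumes [measurable]: "f \<in> borel_measurable borel"
    and bounded: "\<And>x. x \<in> {a..b} \<Longrightarrow> \<bar>f x\<bar> \<le> K"
  shows "f integrable_on {a..b}"
proof -
  have "set_integrable lborel {a..b} f"
    unfolding set_integrable_def
    by (rule integrableI_bounded_set_indicator[where B = K])
      (use bounded in \<open>auto simp: emeasure_lborel_Icc_eq\<close>)
  then show ?thesis
    by (rule set_borel_integral_eq_integral(1))
qed

lemma weighted_radial_integral_mono:
  fixes P f g :: "real \<Rightarrow> real"
  assumes [measurable]: "P \<in> borel_measurable borel" "f \<in> borel_measurable borel" "g \<in> borel_measurable borel"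
    and P: "\<And>x. 0 \<le> P x" "\<And>x. P x \<le> 1"
    and fg: "\<And>x. x \<in> {0..R} \<Longrightarrow> \<bar>f x\<bar> \<le> 1" "\<And>x. x \<in> {0..R} \<Longrightarrow> \<bar>g x\<bar> \<le> 1"
      "\<And>x. x \<in> {0..R} \<Longrightarrow> f x \<le> g x"
  shows "integral {0..R} (\<lambda>x. P x * f x * x) \<le> integral {0..R} (\<lambda>x. P x * g x * x)"
proof (rule integral_le)
  have bound: "\<bar>P x * h x * x\<bar> \<le> R" if "x \<in> {0..R}" "\<bar>h x\<bar> \<le> 1" for h :: "real \<Rightarrow> real" and x
  proof -
    have "\<bar>P x\<bar> * \<bar>h x\<bar> \<le> 1"
      using P[of x] that by (intro mult_le_one) auto
    then have "\<bar>P x\<bar> * \<bar>h x\<bar> * \<bar>x\<bar> \<le> 1 * R"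
      using that by (intro mult_mono) auto
    then show ?thesis
      by (simp add: abs_mult)
  qed
  show "(\<lambda>x. P x * f x * x) integrable_on {0..R}" "(\<lambda>x. P x * g x * x) integrable_on {0..R}"
    by (intro integrable_on_bounded_borel[where K = R] bound fg; simp)+
  fix x
  assume x: "x \<in> {0..R}"
  then show "P x * f x * x \<le> P x * g x * x"
    using P[of x] fg(3)[OF x] by (intro mult_right_mono mult_left_mono) auto
qed

lemma PL_nonneg: "0 \<le> C \<Longrightarrow> 0 \<le> PL H B C r0"
  unfolding PL_def by simp

lemma PL_le_one: "0 \<le> C \<Longrightarrow> PL H B C r0 \<le> 1"
  unfolding PL_def by (simp add: divide_le_eq)

lemma PN_nonneg: "0 \<le> C \<Longrightarrow> 0 \<le> PN H B C r0"
  unfolding PN_def using PL_le_one by simp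

lemma PN_le_one: "0 \<le> C \<Longrightarrow> PN H B C r0 \<le> 1"
  unfolding PN_def using PL_nonneg by simp

lemma Asf_mono:
  assumes "0 \<le> \<delta>1" "\<delta>1 \<le> \<delta>2" "0 \<le> alN"
  shows "Asf \<delta>1 H als alN r0 \<le> Asf \<delta>2 H als alN r0"
  unfolding Asf_def using assms by (intro powr_mono2 mult_right_mono) simp_all

lemma Bsf_antimono:
  assumes "0 < \<delta>1" "\<delta>1 \<le> \<delta>2" "0 \<le> alN"
  shows "Bsf \<delta>2 H als alN r0 \<le> Bsf \<delta>1 H als alN r0"
  unfolding Bsf_def using assms by (intro powr_mono2 mult_right_mono) (simp_all add: frac_le)

lemma CA1_mono:
  assumes "0 \<le> lam" "0 \<le> C" "0 \<le> alN" "0 < \<delta>1" "\<delta>1 \<le> \<delta>2"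
  shows "CA1 lam Rc H alL alN B C \<delta>1 \<le> CA1 lam Rc H alL alN B C \<delta>2"
proof -
  have "integral {0..Rc} (\<lambda>r0. P r0 * Fcdf lam Rc r0 (Asf \<delta>1 H als alN r0) * r0)
      \<le> integral {0..Rc} (\<lambda>r0. P r0 * Fcdf lam Rc r0 (Asf \<delta>2 H als alN r0) * r0)"
    if [measurable]: "P \<in> borel_measurable borel" and "\<And>x. 0 \<le> P x" "\<And>x. P x \<le> 1" for P als
    by (rule weighted_radial_integral_mono)
      (use that assms in \<open>auto simp: abs_le_iff Fcdf_nonneg Fcdf_le_one intro!: Fcdf_mono Asf_mono\<close>)
  from this[OF borel_measurable_PL PL_nonneg[OF assms(2)] PL_le_one[OF assms(2)]]
    this[OF borel_measurable_PN PN_nonneg[OF assms(2)] PN_le_one[OF assms(2)]]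
  show ?thesis
    unfolding CA1_def by (intro mult_left_mono add_mono) simp_all
qed

lemma CA3_mono:
  assumes "0 \<le> lam" "0 \<le> C" "0 \<le> alN" "0 < \<delta>1" "\<delta>1 \<le> \<delta>2"
  shows "CA3 lam Rc H alL alN B C \<delta>1 \<le> CA3 lam Rc H alL alN B C \<delta>2"
proof -
  have "integral {0..Rc} (\<lambda>r0. P r0 * (1 - Fcdf lam Rc r0 (Bsf \<delta>1 H als alN r0)) * r0)
      \<le> integral {0..Rc} (\<lambda>r0. P r0 * (1 - Fcdf lam Rc r0 (Bsf \<delta>2 H als alN r0)) * r0)"
    if [measurable]: "P \<in> borel_measurable borel" and "\<And>x. 0 \<le> P x" "\<And>x. P x \<le> 1" for P als
    by (rule weighted_radial_integral_mono)
      (use that assms in \<open>auto simp: abs_le_iff Fcdf_nonneg Fcdf_le_one intro!: Fcdf_mono Bsf_antimono\<close>)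
  from this[OF borel_measurable_PL PL_nonneg[OF assms(2)] PL_le_one[OF assms(2)]]
    this[OF borel_measurable_PN PN_nonneg[OF assms(2)] PN_le_one[OF assms(2)]]
  show ?thesis
    unfolding CA3_def by (intro mult_left_mono add_mono) simp_all
qed

lemma CA2_antimono:
  assumes "0 \<le> lam" "0 \<le> C" "0 \<le> alN" "0 < \<delta>1" "\<delta>1 \<le> \<delta>2"
  shows "CA2 lam Rc H alL alN B C \<delta>2 \<le> CA2 lam Rc H alL alN B C \<delta>1"
proof -
  have "integral {0..Rc} (\<lambda>r0. P r0 *
          (Fcdf lam Rc r0 (Bsf \<delta>2 H als alN r0) - Fcdf lam Rc r0 (Asf \<delta>2 H als alN r0)) * r0)
      \<le> integral {0..Rc} (\<lambda>r0. P r0 *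
          (Fcdf lam Rc r0 (Bsf \<delta>1 H als alN r0) - Fcdf lam Rc r0 (Asf \<delta>1 H als alN r0)) * r0)"
    if [measurable]: "P \<in> borel_measurable borel" and "\<And>x. 0 \<le> P x" "\<And>x. P x \<le> 1" for P als
  proof (rule weighted_radial_integral_mono)
    fix r0 :: real
    assume "r0 \<in> {0..Rc}"
    then have "Fcdf lam Rc r0 (Asf \<delta>1 H als alN r0) \<le> Fcdf lam Rc r0 (Asf \<delta>2 H als alN r0)"
      and "Fcdf lam Rc r0 (Bsf \<delta>2 H als alN r0) \<le> Fcdf lam Rc r0 (Bsf \<delta>1 H als alN r0)"
      and "0 \<le> Fcdf lam Rc r0 r" "Fcdf lam Rc r0 r \<le> 1" for r
      using assms by (auto intro!: Fcdf_mono Asf_mono Bsf_antimono Fcdf_nonneg Fcdf_le_one)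
    then show "\<bar>Fcdf lam Rc r0 (Bsf \<delta>2 H als alN r0) - Fcdf lam Rc r0 (Asf \<delta>2 H als alN r0)\<bar> \<le> 1"
      and "\<bar>Fcdf lam Rc r0 (Bsf \<delta>1 H als alN r0) - Fcdf lam Rc r0 (Asf \<delta>1 H als alN r0)\<bar> \<le> 1"
      and "Fcdf lam Rc r0 (Bsf \<delta>2 H als alN r0) - Fcdf lam Rc r0 (Asf \<delta>2 H als alN r0)
        \<le> Fcdf lam Rc r0 (Bsf \<delta>1 H als alN r0) - Fcdf lam Rc r0 (Asf \<delta>1 H als alN r0)"
      by (smt (verit))+
  qed (use that in simp_all)
  from this[OF borel_measurable_PL PL_nonneg[OF assms(2)] PL_le_one[OF assms(2)]]
    this[OF borel_measurable_PN PN_nonneg[OF assms(2)] PN_le_one[OF assms(2)]]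
  show ?thesis
    unfolding CA2_def by (intro mult_left_mono add_mono) simp_all
qed

theorem corollary1:
  fixes lam Rc H alL alN B C :: real
  assumes "lam > 0" "Rc > 0" "H > 0" "alL > 0" "alN > 0" "B > 0" "C > 0"
  shows "\<forall>d1 d2. 0 < d1 \<longrightarrow> d1 \<le> d2 \<longrightarrow> d2 < 1 \<longrightarrow>
           CbarA1 lam Rc H alL alN B C d1 \<le> CbarA1 lam Rc H alL alN B C d2 \<and>
           CbarA3 lam Rc H alL alN B C d1 \<le> CbarA3 lam Rc H alL alN B C d2 \<and>
           CbarA2 lam Rc H alL alN B C d2 \<le> CbarA2 lam Rc H alL alN B C d1"
proof (intro allI impI conjI)
  fix d1 d2 :: real
  assume d: "0 < d1" "d1 \<le> d2"
  have mono_params: "0 \<le> lam" "0 \<le> C" "0 \<le> alN"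
    using assms by simp_all
  show "CbarA1 lam Rc H alL alN B C d1 \<le> CbarA1 lam Rc H alL alN B C d2"
    unfolding CbarA1_def by (intro divide_right_mono CA1_mono mono_params d) simp
  show "CbarA3 lam Rc H alL alN B C d1 \<le> CbarA3 lam Rc H alL alN B C d2"
    unfolding CbarA3_def by (intro divide_right_mono CA3_mono mono_params d) simp
  show "CbarA2 lam Rc H alL alN B C d2 \<le> CbarA2 lam Rc H alL alN B C d1"
    unfolding CbarA2_def by (intro divide_right_mono CA2_antimono mono_params d) simp
qed

end
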